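(* Let $A=\{a_s(n_s)\}_{s=1}^k$ and $B=\{b_t(m_t)\}_{t=1}^l$ be finite systems of residue classes with positive integer moduli and integers $0\leqslant a_s<n_s$, $0\leqslant b_t<m_t$, such that $n_1,\ldots,n_k$ are pairwise distinct and $m_1,\ldots,m_l$ are pairwise distinct. Let $p$ be a prime with $p>|S(n_1,\ldots,n_k,m_1,\ldots,m_l)|$ and let $\zeta_p$ be a primitive $p$th root of unity. Then $A$ and $B$ are identical (i.e., $k=l$ and $\{(a_s,n_s)\}_{s=1}^k=\{(b_t,m_t)\}_{t=1}^l$) if and only if $$\sum_{s=1}^k\frac{\zeta_p^{a_s}}{1-\zeta_p^{n_s}}=\sum_{t=1}^l\frac{\zeta_p^{b_t}}{1-\zeta_p^{m_t}}.$$
   Context: For a positive integer $n$ and $a\in\{0,\ldots,n-1\}$, $a(n)$ denotes the residue class $\{x\in\mathbb Z: x\equiv a \pmod n\}$. For positive integers $n_1,\ldots,n_k$, $S(n_1,\ldots,n_k)=\{r/n_s: r=0,\ldots,n_s-1;\ s=1,\ldots,k\}$, a set of rational numbers, and $|S(\cdot)|$ denotes its cardinality. *)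

theory Defs
  imports Complex_Main "HOL-Computational_Algebra.Primes"
begin

definition S_set :: "nat set \<Rightarrow> rat set" where
  "S_set M = {of_nat r / of_nat n | r n. n \<in> M \<and> r < n}"

definition primitive_root_unity :: "nat \<Rightarrow> complex \<Rightarrow> bool" where
  "primitive_root_unity p z \<longleftrightarrow> 0 < p \<and> z ^ p = 1 \<and> (\<forall>j. 0 < j \<and> j < p \<longrightarrow> z ^ j \<noteq> 1)"

end

theory Submission
  imports Defs "HOL-Computational_Algebra.Polynomial_Factorial"
begin

(* If the two sums agree at \<zeta>, clearing the denominators z ^ d - 1 yields an integer polynomial
   vanishing at \<zeta>. The polynomial 1 + z + ... + z ^ (p - 1) is irreducible by Eisenstein's
   criterion, so this polynomial vanishes at every p-th root of unity w \<noteq> 1 as well; since no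
   modulus is divisible by p, the two sums agree at all these p - 1 points. Multiplying instead by
   the product of z - \<omega> over the set U of all roots of unity of orders n_s and m_t turns each sum
   into a polynomial of degree < |U|, and |U| \<le> |S| < p, so the two polynomials coincide.
   Evaluated at a primitive N-th root of unity, N the largest modulus on which the systems differ,
   only the terms of modulus N survive, and these must then coincide too. *)

section \<open>Eisenstein's criterion and the cyclotomic polynomial of prime order\<close>

lemma eisenstein_dvd_coeff:
  fixes G H :: "'a::idom poly"
  assumes p: "prime_elem p"
    and dvd_coeff: "\<forall>j<degree (G * H). p dvd coeff (G * H) j"
    and deg_H: "degree H > 0"
    and dvd_G0: "p dvd coeff G 0" and not_dvd_H0: "\<not> p dvd coeff H 0"
  shows "p dvd coeff G i"
proof (induction i rule: less_induct)
  case (less i)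
  show ?case
  proof (cases "i = 0 \<or> degree G < i")
    case True
    then show ?thesis using dvd_G0 by (auto simp: coeff_eq_0)
  next
    case False
    then have "G \<noteq> 0" and "H \<noteq> 0" using deg_H by auto
    with False deg_H have "i < degree (G * H)" by (simp add: degree_mult_eq)
    then have "p dvd coeff (G * H) i" using dvd_coeff by blast
    moreover have "coeff (G * H) i = coeff G i * coeff H 0 + (\<Sum>j<i. coeff G j * coeff H (i - j))"
      by (simp add: coeff_mult lessThan_Suc_atMost[symmetric])
    moreover have "p dvd (\<Sum>j<i. coeff G j * coeff H (i - j))"
      using less.IH by (intro dvd_sum) auto
    ultimately have "p dvd coeff G i * coeff H 0"
      by (metis dvd_add_left_iff)
    then show ?thesis using p not_dvd_H0 by (simp add: prime_elem_dvd_mult_iff)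
  qed
qed

lemma eisenstein_criterion:
  fixes F G H :: "'a::idom poly"
  assumes p: "prime_elem p" and F: "F = G * H"
    and dvd_coeff: "\<forall>j<degree F. p dvd coeff F j"
    and not_dvd_lead: "\<not> p dvd lead_coeff F"
    and not_dvd_coeff0: "\<not> p ^ 2 dvd coeff F 0"
  shows "degree G = 0 \<or> degree H = 0"
proof (rule ccontr)
  assume "\<not> (degree G = 0 \<or> degree H = 0)"
  then have deg: "degree G > 0" "degree H > 0" by auto
  have "F \<noteq> 0" using not_dvd_lead by auto
  then have "degree F > 0" using F deg by (auto simp: degree_mult_eq)
  then have "p dvd coeff F 0" using dvd_coeff by blast
  moreover have "coeff F 0 = coeff G 0 * coeff H 0" by (simp add: F coeff_mult)
  ultimately have "p dvd coeff G 0 * coeff H 0" by simp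
  moreover have "\<not> (p dvd coeff G 0 \<and> p dvd coeff H 0)"
    using F not_dvd_coeff0 by (auto simp: coeff_mult power2_eq_square intro: mult_dvd_mono)
  ultimately obtain X Y where XY: "F = X * Y" "degree Y > 0" "p dvd coeff X 0" "\<not> p dvd coeff Y 0"
    using p deg F by (metis mult.commute prime_elem_dvd_mult_iff)
  then have "p dvd lead_coeff X"
    using eisenstein_dvd_coeff[OF p _ XY(2-4)] dvd_coeff by blast
  then show False using not_dvd_lead XY(1) by (simp add: lead_coeff_mult)
qed

definition geom_poly :: "nat \<Rightarrow> int poly" where
  "geom_poly n = (\<Sum>i<n. monom 1 i)"

lemma coeff_geom_poly_shift: "coeff (pcompose (geom_poly n) [:1, 1:]) j = int (n choose Suc j)"
proof -
  have pcompose_monom: "pcompose (monom 1 i) q = q ^ i" for i and q :: "int poly"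
    by (induction i) (simp_all add: monom_Suc pcompose_pCons pcompose_1)
  have coeff_power: "coeff ([:1, 1:] ^ i :: int poly) j = int (i choose j)" for i
  proof (cases "j \<le> i")
    case False
    then have "degree ([:1, 1:] ^ i :: int poly) < j" by (simp add: degree_linear_power)
    with False show ?thesis by (simp add: coeff_eq_0)
  qed (simp add: coeff_linear_poly_power)
  have "coeff (pcompose (geom_poly n) [:1, 1:]) j = (\<Sum>i<n. int (i choose j))"
    by (simp add: geom_poly_def pcompose_sum pcompose_monom coeff_sum coeff_power)
  also have "\<dots> = int (n choose Suc j)"
    by (induction n) simp_all
  finally show ?thesis .
qed

lemma irreducible_geom_poly:
  assumes "prime p"
  shows "irreducible (geom_poly p)"
proof -
  have p: "p > 1" using assms prime_gt_1_nat by blast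
  define F where "F = pcompose (geom_poly p) [:1, 1:]"
  have coeff_F: "coeff F j = int (p choose Suc j)" for j
    unfolding F_def by (rule coeff_geom_poly_shift)
  have deg_F: "degree F = p - 1"
  proof (rule antisym)
    show "degree F \<le> p - 1" by (rule degree_le) (auto simp: coeff_F)
    show "p - 1 \<le> degree F" by (rule le_degree) (use p in \<open>simp add: coeff_F\<close>)
  qed
  have coeff0: "coeff (geom_poly p) 0 = 1"
    using p by (simp add: geom_poly_def coeff_sum coeff_monom lessThan_def)
  have unit_if_const: "is_unit g" if "geom_poly p = g * h" "degree g = 0" for g h
  proof -
    obtain c where "g = [:c:]" using \<open>degree g = 0\<close> by (rule degree_eq_zeroE)
    with that(1) coeff0 have "c * coeff h 0 = 1" by (metis coeff_mult_0 coeff_pCons_0)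
    then show ?thesis using \<open>g = [:c:]\<close> by (metis dvdI is_unit_const_poly_iff mult.commute)
  qed
  show ?thesis
  proof (rule irreducibleI)
    have "degree (geom_poly p) = p - 1"
      using deg_F by (simp add: F_def degree_pcompose)
    then show "geom_poly p \<noteq> 0" "\<not> is_unit (geom_poly p)"
      using p by (auto simp: is_unit_poly_iff)
  next
    fix g h assume gh: "geom_poly p = g * h"
    have "degree (pcompose g [:1, 1:]) = 0 \<or> degree (pcompose h [:1, 1:]) = 0"
    proof (rule eisenstein_criterion)
      show "prime_elem (int p)" using assms by simp
      show "F = pcompose g [:1, 1:] * pcompose h [:1, 1:]"
        by (simp add: F_def gh pcompose_mult)
      show "\<forall>j<degree F. int p dvd coeff F j"
        using assms deg_F by (auto simp: coeff_F intro: dvd_choose_prime)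
      show "\<not> int p dvd lead_coeff F" "\<not> int p ^ 2 dvd coeff F 0"
        using p deg_F by (auto simp: coeff_F power2_eq_square dest: zdvd_imp_le)
    qed
    then have "degree g = 0 \<or> degree h = 0" by (simp add: degree_pcompose)
    then show "is_unit g \<or> is_unit h"
      using unit_if_const[OF gh] unit_if_const[of h g] gh by (auto simp: mult.commute)
  qed
qed

section \<open>Conjugate roots of integer polynomials\<close>

lemma map_poly_of_int_add:
  "map_poly (of_int :: int \<Rightarrow> 'a::comm_ring_1) (p + q) = map_poly of_int p + map_poly of_int q"
  by (simp add: poly_eq_iff coeff_map_poly)

lemma map_poly_of_int_diff:
  "map_poly (of_int :: int \<Rightarrow> 'a::comm_ring_1) (p - q) = map_poly of_int p - map_poly of_int q"
  by (simp add: poly_eq_iff coeff_map_poly)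

lemma map_poly_of_int_uminus:
  "map_poly (of_int :: int \<Rightarrow> 'a::comm_ring_1) (- p) = - map_poly of_int p"
  by (simp add: poly_eq_iff coeff_map_poly)

lemma map_poly_of_int_mult:
  "map_poly (of_int :: int \<Rightarrow> 'a::comm_ring_1) (p * q) = map_poly of_int p * map_poly of_int q"
  by (simp add: poly_eq_iff coeff_map_poly coeff_mult)

lemma map_poly_of_int_smult:
  "map_poly (of_int :: int \<Rightarrow> 'a::comm_ring_1) (smult c p) = smult (of_int c) (map_poly of_int p)"
  by (simp add: map_poly_smult)

lemma map_poly_of_int_sum:
  "map_poly (of_int :: int \<Rightarrow> 'a::comm_ring_1) (\<Sum>x\<in>A. f x) = (\<Sum>x\<in>A. map_poly of_int (f x))"
  by (induction A rule: infinite_finite_induct) (simp_all add: map_poly_of_int_add)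

lemma map_poly_of_int_prod:
  "map_poly (of_int :: int \<Rightarrow> 'a::comm_ring_1) (\<Prod>x\<in>A. f x) = (\<Prod>x\<in>A. map_poly of_int (f x))"
  by (induction A rule: infinite_finite_induct) (simp_all add: map_poly_of_int_mult)

lemma poly_geom_poly_root_unity:
  fixes x :: "'a::field"
  assumes "x ^ n = 1" "x \<noteq> 1"
  shows "poly (map_poly of_int (geom_poly n)) x = 0"
  using assms by (simp add: geom_poly_def map_poly_of_int_sum map_poly_monom poly_sum poly_monom sum_gp_strict)

lemma min_degree_root_int_poly_dvd:
  fixes r Q :: "int poly" and z :: "'a::comm_ring_1"
  assumes r: "r \<noteq> 0" "poly (map_poly of_int r) z = 0"
    and min: "\<And>s. s \<noteq> 0 \<Longrightarrow> poly (map_poly of_int s) z = 0 \<Longrightarrow> degree r \<le> degree s"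
    and Q: "poly (map_poly of_int Q) z = 0"
  shows "\<exists>c q. c \<noteq> 0 \<and> smult c Q = r * q"
proof -
  obtain q s where qs: "pseudo_divmod Q r = (q, s)" by (cases "pseudo_divmod Q r")
  define c where "c = lead_coeff r ^ (Suc (degree Q) - degree r)"
  have eq: "smult c Q = r * q + s" using pseudo_divmod(1)[OF r(1) qs] by (simp add: c_def)
  have "poly (map_poly (of_int :: int \<Rightarrow> 'a) s) z = 0"
    using arg_cong[OF eq, of "\<lambda>P. poly (map_poly of_int P) z"] r(2) Q
    by (simp add: map_poly_of_int_smult map_poly_of_int_add map_poly_of_int_mult)
  then have "s = 0" using min pseudo_divmod(2)[OF r(1) qs] by force
  moreover have "c \<noteq> 0" using r(1) by (simp add: c_def)
  ultimately show ?thesis using eq by auto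
qed

lemma irreducible_int_poly_conjugate_root:
  fixes f P :: "int poly" and z w :: "'a::field_char_0"
  assumes f: "irreducible f"
    and f_z: "poly (map_poly of_int f) z = 0" and f_w: "poly (map_poly of_int f) w = 0"
    and P_z: "poly (map_poly of_int P) z = 0"
  shows "poly (map_poly of_int P) w = 0"
proof -
  define A where "A = {r. r \<noteq> 0 \<and> poly (map_poly (of_int :: int \<Rightarrow> 'a) r) z = 0}"
  have "f \<in> A" using f f_z by (auto simp: A_def)
  then obtain r where "r \<in> A" and min: "\<And>s. s \<in> A \<Longrightarrow> degree r \<le> degree s"
    using ex_has_least_nat[of "\<lambda>r. r \<in> A" f degree] by blast
  then have r: "r \<noteq> 0" "poly (map_poly of_int r) z = 0" by (auto simp: A_def)
  have dvd: "\<exists>c q. c \<noteq> 0 \<and> smult c Q = r * q" if "poly (map_poly of_int Q) z = 0" for Q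
    using min_degree_root_int_poly_dvd[OF r _ that] min by (auto simp: A_def)
  have r_w: "poly (map_poly of_int r) w = 0"
  proof -
    obtain c q where "c \<noteq> 0" and cq: "smult c f = r * q" using dvd[OF f_z] by blast
    have "prime_elem f" using f by (rule irreducible_imp_prime_poly)
    moreover have "f dvd r * q" using dvd_smult[of f f c] by (simp add: cq)
    ultimately consider "f dvd r" | "f dvd q" by (auto simp: prime_elem_dvd_mult_iff)
    then show ?thesis
    proof cases
      case 1
      then obtain s where "r = f * s" by (elim dvdE)
      then show ?thesis using f_w by (simp add: map_poly_of_int_mult)
    next
      case 2
      then obtain s where "q = f * s" by (elim dvdE)
      with cq have "[:c:] * f = (r * s) * f" by (simp add: mult_ac)
      moreover have "f \<noteq> 0" using f by (auto simp: irreducible_def)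
      ultimately have "[:c:] = r * s" by (metis mult_cancel_right)
      have "degree (r * s) = 0" unfolding \<open>[:c:] = r * s\<close>[symmetric] by simp
      moreover have "s \<noteq> 0" using \<open>[:c:] = r * s\<close> \<open>c \<noteq> 0\<close> by auto
      ultimately have "degree r = 0" using r(1) by (simp add: degree_mult_eq)
      then obtain r0 where "r = [:r0:]" by (elim degree_eq_zeroE)
      then have False using r by (simp add: map_poly_pCons)
      then show ?thesis ..
    qed
  qed
  obtain c q where "c \<noteq> 0" and cq: "smult c P = r * q" using dvd[OF P_z] by blast
  have "poly (map_poly of_int (smult c P)) w = poly (map_poly (of_int :: int \<Rightarrow> 'a) (r * q)) w"
    by (simp only: cq)
  then have "of_int c * poly (map_poly (of_int :: int \<Rightarrow> 'a) P) w = 0"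
    using r_w by (simp add: map_poly_of_int_smult map_poly_of_int_mult)
  then show ?thesis using \<open>c \<noteq> 0\<close> by simp
qed

section \<open>Roots of unity and the set S\<close>

lemma prod_roots_unity:
  assumes "0 < n"
  shows "(\<Prod>\<omega>\<in>{w::complex. w ^ n = 1}. z - \<omega>) = z ^ n - 1"
proof -
  let ?R = "{w::complex. w ^ n = 1}"
  have fin: "finite ?R" using assms by (intro finite_roots_unity) simp
  have "(\<Prod>\<omega>\<in>?R. [:- \<omega>, 1:]) = monom 1 n - 1"
  proof (rule poly_eqI_degree_lead_coeff)
    have "degree (\<Prod>\<omega>\<in>?R. [:- \<omega>, 1:]) = n"
      by (simp add: degree_prod_eq_sum_degree card_roots_unity_eq[OF assms])
    then show "coeff (\<Prod>\<omega>\<in>?R. [:- \<omega>, 1:]) n = coeff (monom 1 n - 1) n"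
      using assms lead_coeff_prod[of "\<lambda>\<omega>. [:- \<omega>, 1:]" ?R] by simp
    show "card ?R \<ge> n" using assms by (simp add: card_roots_unity_eq)
    show "degree (monom 1 n - 1 :: complex poly) \<le> n"
      by (intro degree_diff_le) (simp_all add: degree_monom_le)
    show "degree (\<Prod>\<omega>\<in>?R. [:- \<omega>, 1:]) \<le> n"
      using \<open>degree _ = n\<close> by simp
    show "poly (\<Prod>\<omega>\<in>?R. [:- \<omega>, 1:]) w = poly (monom 1 n - 1) w" if "w \<in> ?R" for w
      using that fin by (simp add: poly_prod poly_monom prod_zero_iff)
  qed
  then have "poly (\<Prod>\<omega>\<in>?R. [:- \<omega>, 1:]) z = poly (monom 1 n - 1) z" by simp
  then show ?thesis by (simp add: poly_prod poly_monom)
qed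

lemma pow_eq_1_if_coprime:
  fixes x :: "'a::monoid_mult"
  assumes "x ^ d = 1" "x ^ e = 1" "coprime d e"
  shows "x = 1"
proof (cases "d = 0")
  case True
  then show ?thesis using assms by simp
next
  case False
  then obtain u v where "d * u = e * v + 1" using bezout_nat[of d e] assms(3) by auto
  then have "x ^ (d * u) = x ^ (e * v + 1)" by simp
  then show ?thesis using assms(1,2) by (simp add: power_mult power_add)
qed

lemma inj_on_power_cis:
  assumes "0 < N"
  shows "inj_on (\<lambda>j. cis (2 * pi / N) ^ j) {..<N}"
  using bij_betw_roots_unity[OF assms] by (simp add: bij_betw_def DeMoivre mult_ac)

lemma primitive_root_unity_cis:
  assumes "0 < N"
  shows "primitive_root_unity N (cis (2 * pi / N))"
  unfolding primitive_root_unity_def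
proof (intro conjI allI impI assms)
  show "cis (2 * pi / N) ^ N = 1" using assms by (simp add: DeMoivre)
  show "cis (2 * pi / N) ^ j \<noteq> 1" if "0 < j \<and> j < N" for j
    using that inj_onD[OF inj_on_power_cis[OF assms], of j 0] by auto
qed

lemma finite_S_set:
  assumes "finite M"
  shows "finite (S_set M)"
proof -
  have "S_set M \<subseteq> (\<lambda>(n, r). of_nat r / of_nat n) ` (SIGMA n:M. {..<n})"
    unfolding S_set_def by force
  then show ?thesis using assms by (auto intro: finite_subset)
qed

lemma le_card_S_set:
  assumes "finite M" "n \<in> M"
  shows "n \<le> card (S_set M)"
proof -
  have "inj_on (\<lambda>r. of_nat r / of_nat n :: rat) {..<n}"
    by (auto simp: inj_on_def)
  moreover have "(\<lambda>r. of_nat r / of_nat n :: rat) ` {..<n} \<subseteq> S_set M"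
    unfolding S_set_def using assms(2) by auto
  ultimately show ?thesis
    using card_inj_on_le finite_S_set[OF assms(1)] by fastforce
qed

lemma card_roots_unity_le_card_S_set:
  assumes "finite M" "0 \<notin> M"
  shows "finite {w::complex. \<exists>n\<in>M. w ^ n = 1}"
    and "card {w::complex. \<exists>n\<in>M. w ^ n = 1} \<le> card (S_set M)"
proof -
  have "{w::complex. \<exists>n\<in>M. w ^ n = 1} \<subseteq> (\<lambda>q. cis (2 * pi * of_rat q)) ` S_set M"
  proof
    fix w :: complex assume "w \<in> {w. \<exists>n\<in>M. w ^ n = 1}"
    then obtain n where n: "n \<in> M" "w ^ n = 1" by auto
    then have "n > 0" using assms(2) by (cases n) auto
    then obtain r where r: "r < n" "w = cis (2 * pi * real r / real n)"
      using bij_betw_roots_unity[of n] n(2) by (auto simp: bij_betw_def)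
    have "of_nat r / of_nat n \<in> S_set M" unfolding S_set_def using r n by auto
    moreover have "w = cis (2 * pi * of_rat (of_nat r / of_nat n))"
      using r by (simp add: of_rat_divide)
    ultimately show "w \<in> (\<lambda>q. cis (2 * pi * of_rat q)) ` S_set M" by blast
  qed
  then show "finite {w::complex. \<exists>n\<in>M. w ^ n = 1}"
    and "card {w::complex. \<exists>n\<in>M. w ^ n = 1} \<le> card (S_set M)"
    using finite_S_set[OF assms(1)] by (auto intro: finite_surj surj_card_le)
qed

section \<open>Sums of fractions z ^ a / (1 - z ^ n)\<close>

(* A system of residue classes a(n) is encoded as the set of its pairs (a, n). *)
definition frac_sum :: "(nat \<times> nat) set \<Rightarrow> complex \<Rightarrow> complex" where
  "frac_sum P z = (\<Sum>(a, n)\<in>P. z ^ a / (1 - z ^ n))"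

lemma frac_sum_mult_prod_int_poly:
  assumes "finite M" "snd ` P \<subseteq> M"
  shows "\<exists>R. \<forall>z. (\<forall>n\<in>M. z ^ n \<noteq> 1) \<longrightarrow>
           frac_sum P z * (\<Prod>n\<in>M. z ^ n - 1) = poly (map_poly of_int R) z"
proof -
  define R :: "int poly" where
    "R = - (\<Sum>(a, n)\<in>P. monom 1 a * (\<Prod>d\<in>M - {n}. monom 1 d - 1))"
  have "frac_sum P z * (\<Prod>n\<in>M. z ^ n - 1) = poly (map_poly of_int R) z"
    if z: "\<forall>n\<in>M. z ^ n \<noteq> 1" for z
  proof -
    have summand: "z ^ a / (1 - z ^ n) * (\<Prod>d\<in>M. z ^ d - 1) = - (z ^ a * (\<Prod>d\<in>M - {n}. z ^ d - 1))"
      if "(a, n) \<in> P" for a n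
    proof -
      have "n \<in> M" using that assms(2) by force
      then have split: "(\<Prod>d\<in>M. z ^ d - 1) = (z ^ n - 1) * (\<Prod>d\<in>M - {n}. z ^ d - 1)"
        using assms(1) by (simp add: prod.remove)
      have "1 - z ^ n \<noteq> 0" using z \<open>n \<in> M\<close> by simp
      then show ?thesis unfolding split by (simp add: field_simps)
    qed
    have "frac_sum P z * (\<Prod>d\<in>M. z ^ d - 1) = (\<Sum>(a, n)\<in>P. - (z ^ a * (\<Prod>d\<in>M - {n}. z ^ d - 1)))"
      unfolding frac_sum_def sum_distrib_right by (intro sum.cong refl) (auto simp only: summand split: prod.splits)
    also have "\<dots> = poly (map_poly of_int R) z"
      by (simp add: R_def case_prod_unfold map_poly_of_int_uminus map_poly_of_int_sum
          map_poly_of_int_mult map_poly_of_int_prod map_poly_of_int_diff map_poly_monom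
          poly_sum poly_prod poly_monom sum_negf)
    finally show ?thesis .
  qed
  then show ?thesis by blast
qed

lemma frac_sum_eq_at_conjugate_root:
  fixes PA PB :: "(nat \<times> nat) set" and z w :: complex
  assumes p: "prime p" and M: "finite M" "snd ` PA \<subseteq> M" "snd ` PB \<subseteq> M"
    and coprime: "\<forall>n\<in>M. coprime n p"
    and z: "z ^ p = 1" "z \<noteq> 1" and w: "w ^ p = 1" "w \<noteq> 1"
    and eq: "frac_sum PA z = frac_sum PB z"
  shows "frac_sum PA w = frac_sum PB w"
proof -
  obtain RA RB where
    RA: "\<forall>x. (\<forall>n\<in>M. x ^ n \<noteq> 1) \<longrightarrow>
           frac_sum PA x * (\<Prod>n\<in>M. x ^ n - 1) = poly (map_poly of_int RA) x" and
    RB: "\<forall>x. (\<forall>n\<in>M. x ^ n \<noteq> 1) \<longrightarrow>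
           frac_sum PB x * (\<Prod>n\<in>M. x ^ n - 1) = poly (map_poly of_int RB) x"
    using frac_sum_mult_prod_int_poly[OF M(1,2)] frac_sum_mult_prod_int_poly[OF M(1,3)] by metis
  have avoid: "\<forall>n\<in>M. x ^ n \<noteq> 1" if "x ^ p = 1" "x \<noteq> 1" for x :: complex
    using pow_eq_1_if_coprime coprime that by blast
  have diff: "(frac_sum PA x - frac_sum PB x) * (\<Prod>n\<in>M. x ^ n - 1) = poly (map_poly of_int (RA - RB)) x"
    if "x ^ p = 1" "x \<noteq> 1" for x
    using RA RB avoid[OF that] by (simp add: map_poly_of_int_diff left_diff_distrib)
  have "poly (map_poly of_int (RA - RB)) w = 0"
  proof (rule irreducible_int_poly_conjugate_root[OF irreducible_geom_poly[OF p]])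
    show "poly (map_poly of_int (geom_poly p)) z = 0" "poly (map_poly of_int (geom_poly p)) w = 0"
      using z w by (simp_all add: poly_geom_poly_root_unity)
    show "poly (map_poly of_int (RA - RB)) z = 0" using diff[OF z] eq by simp
  qed
  moreover have "(\<Prod>n\<in>M. w ^ n - 1) \<noteq> 0" using avoid[OF w] M(1) by simp
  ultimately show ?thesis using diff[OF w] by simp
qed

(* Up to sign, the numerator of z ^ a / (1 - z ^ n) over the common denominator
   \<Prod>\<omega>\<in>U. z - \<omega>. *)
definition cleared_poly :: "complex set \<Rightarrow> nat \<times> nat \<Rightarrow> complex poly" where
  "cleared_poly U = (\<lambda>(a, n). monom 1 a * (\<Prod>\<omega>\<in>U - {w. w ^ n = 1}. [:- \<omega>, 1:]))"

lemma poly_cleared_poly [simp]: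
  "poly (cleared_poly U (a, n)) z = z ^ a * (\<Prod>\<omega>\<in>U - {w. w ^ n = 1}. z - \<omega>)"
  by (simp add: cleared_poly_def poly_prod poly_monom)

lemma degree_cleared_poly:
  assumes "finite U" "{w. w ^ n = 1} \<subseteq> U" "a < n"
  shows "degree (cleared_poly U (a, n)) < card U"
proof -
  have card_roots: "card {w::complex. w ^ n = 1} = n"
    using assms(3) by (simp add: card_roots_unity_eq)
  then have "n \<le> card U" using card_mono[OF assms(1,2)] by simp
  have "degree (cleared_poly U (a, n))
          \<le> degree (monom (1::complex) a) + degree (\<Prod>\<omega>\<in>U - {w. w ^ n = 1}. [:- \<omega>, 1:])"
    unfolding cleared_poly_def prod.case by (rule degree_mult_le)
  also have "\<dots> \<le> a + card (U - {w. w ^ n = 1})"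
    by (simp add: degree_monom_le degree_prod_eq_sum_degree)
  also have "card (U - {w. w ^ n = 1}) = card U - n"
    using card_roots by (simp add: card_Diff_subset assms(2) finite_subset[OF assms(2,1)])
  finally show ?thesis using assms(3) \<open>n \<le> card U\<close> by linarith
qed

lemma frac_sum_mult_prod_eq_sum_cleared_poly:
  assumes U: "finite U" and P: "\<And>a n. (a, n) \<in> P \<Longrightarrow> 0 < n \<and> {w. w ^ n = 1} \<subseteq> U"
    and "z \<notin> U"
  shows "frac_sum P z * (\<Prod>\<omega>\<in>U. z - \<omega>) = - poly (\<Sum>x\<in>P. cleared_poly U x) z"
proof -
  have "z ^ a / (1 - z ^ n) * (\<Prod>\<omega>\<in>U. z - \<omega>) = - poly (cleared_poly U (a, n)) z"
    if "(a, n) \<in> P" for a n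
  proof -
    have n: "0 < n" "{w. w ^ n = 1} \<subseteq> U" using P[OF that] by auto
    then have "1 - z ^ n \<noteq> 0" using \<open>z \<notin> U\<close> by auto
    have "(\<Prod>\<omega>\<in>U. z - \<omega>) = (\<Prod>\<omega>\<in>U - {w. w ^ n = 1}. z - \<omega>) * (\<Prod>\<omega>\<in>{w. w ^ n = 1}. z - \<omega>)"
      by (rule prod.subset_diff[OF n(2) U])
    also have "(\<Prod>\<omega>\<in>{w. w ^ n = 1}. z - \<omega>) = z ^ n - 1"
      by (rule prod_roots_unity[OF n(1)])
    finally have split: "(\<Prod>\<omega>\<in>U. z - \<omega>) = (z ^ n - 1) * (\<Prod>\<omega>\<in>U - {w. w ^ n = 1}. z - \<omega>)"
      by (simp only: mult.commute)
    show ?thesis unfolding split using \<open>1 - z ^ n \<noteq> 0\<close> by (simp add: field_simps)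
  qed
  then show ?thesis
    unfolding frac_sum_def sum_distrib_right poly_sum sum_negf[symmetric]
    by (intro sum.cong) auto
qed

lemma sum_cleared_poly_eq_if_frac_sum_eq:
  assumes U: "finite U" and P: "\<And>a n. (a, n) \<in> PA \<union> PB \<Longrightarrow> a < n \<and> {w. w ^ n = 1} \<subseteq> U"
    and W: "W \<inter> U = {}" "card U \<le> card W" "0 < card W"
    and eq: "\<And>w. w \<in> W \<Longrightarrow> frac_sum PA w = frac_sum PB w"
  shows "(\<Sum>x\<in>PA. cleared_poly U x) = (\<Sum>x\<in>PB. cleared_poly U x)"
proof (rule poly_eqI_degree)
  have clear: "frac_sum Q w * (\<Prod>\<omega>\<in>U. w - \<omega>) = - poly (\<Sum>x\<in>Q. cleared_poly U x) w"
    if "Q \<subseteq> PA \<union> PB" "w \<in> W" for Q w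
  proof (rule frac_sum_mult_prod_eq_sum_cleared_poly[OF U])
    show "0 < n \<and> {w. w ^ n = 1} \<subseteq> U" if "(a, n) \<in> Q" for a n
      using P[of a n] that \<open>Q \<subseteq> PA \<union> PB\<close> by auto
    show "w \<notin> U" using that(2) W(1) by blast
  qed
  show "poly (\<Sum>x\<in>PA. cleared_poly U x) w = poly (\<Sum>x\<in>PB. cleared_poly U x) w" if "w \<in> W" for w
    using clear[of PA w, OF Un_upper1 that] clear[of PB w, OF Un_upper2 that] eq[OF that] by simp
  have "degree (\<Sum>x\<in>Q. cleared_poly U x) < card W" if "Q \<subseteq> PA \<union> PB" for Q
  proof (rule degree_sum_less)
    fix x assume "x \<in> Q"
    obtain b n where x: "x = (b, n)" by (cases x)
    then have "b < n" "{w. w ^ n = 1} \<subseteq> U" using P[of b n] that \<open>x \<in> Q\<close> by auto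
    then have "degree (cleared_poly U x) < card U" using degree_cleared_poly[OF U] x by simp
    then show "degree (cleared_poly U x) < card W" using W(2) by simp
  qed (use W(3) in simp)
  then show "degree (\<Sum>x\<in>PA. cleared_poly U x) < card W" "degree (\<Sum>x\<in>PB. cleared_poly U x) < card W"
    by simp_all
qed

lemma poly_sum_cleared_poly_primitive_root:
  assumes U: "finite U" "{w. w ^ N = 1} \<subseteq> U"
    and Q: "finite Q" "\<And>b n. (b, n) \<in> Q \<Longrightarrow> 0 < n \<and> n \<le> N"
    and \<omega>: "primitive_root_unity N \<omega>"
  shows "poly (\<Sum>x\<in>Q. cleared_poly U x) \<omega>
           = (\<Sum>x\<in>{x\<in>Q. snd x = N}. \<omega> ^ fst x) * (\<Prod>v\<in>U - {w. w ^ N = 1}. \<omega> - v)"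
proof -
  let ?C = "\<Prod>v\<in>U - {w. w ^ N = 1}. \<omega> - v"
  have "\<omega> \<in> U" using \<omega> U(2) by (auto simp: primitive_root_unity_def)
  have summand: "poly (cleared_poly U x) \<omega> = (if snd x = N then \<omega> ^ fst x * ?C else 0)" if "x \<in> Q" for x
  proof -
    obtain b n where x: "x = (b, n)" by (cases x)
    show ?thesis
    proof (cases "n = N")
      case False
      then have "\<omega> ^ n \<noteq> 1" using Q(2)[of b n] that x \<omega> by (auto simp: primitive_root_unity_def)
      then have "\<omega> \<in> U - {w. w ^ n = 1}" using \<open>\<omega> \<in> U\<close> by simp
      then show ?thesis using U(1) x False by (auto simp: prod_zero_iff)
    qed (simp add: x)
  qed
  have "poly (\<Sum>x\<in>Q. cleared_poly U x) \<omega> = (\<Sum>x\<in>Q. if snd x = N then \<omega> ^ fst x * ?C else 0)"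
    unfolding poly_sum by (intro sum.cong refl summand)
  also have "\<dots> = (\<Sum>x\<in>{x\<in>Q. snd x = N}. \<omega> ^ fst x * ?C)"
    using Q(1) by (simp add: sum.inter_filter)
  also have "\<dots> = (\<Sum>x\<in>{x\<in>Q. snd x = N}. \<omega> ^ fst x) * ?C"
    by (simp add: sum_distrib_right)
  finally show ?thesis .
qed

lemma sum_cleared_poly_top_modulus:
  assumes U: "finite U" and fin: "finite PA" "finite PB" and disj: "PA \<inter> PB = {}"
    and inj: "inj_on snd PA" "inj_on snd PB"
    and bounds: "\<And>b n. (b, n) \<in> PA \<union> PB \<Longrightarrow> b < n \<and> n \<le> N \<and> {w. w ^ n = 1} \<subseteq> U"
    and top: "(a, N) \<in> PA"
    and eq: "(\<Sum>x\<in>PA. cleared_poly U x) = (\<Sum>x\<in>PB. cleared_poly U x)"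
  shows False
proof -
  have "a < N" "{w. w ^ N = 1} \<subseteq> U" using bounds[of a N] top by auto
  define \<omega> where "\<omega> = cis (2 * pi / N)"
  have \<omega>: "primitive_root_unity N \<omega>" and inj_pow: "inj_on (\<lambda>j. \<omega> ^ j) {..<N}"
    using primitive_root_unity_cis inj_on_power_cis \<open>a < N\<close> by (simp_all add: \<omega>_def)
  then have "\<omega> ^ N = 1" "\<omega> \<noteq> 0"
    using \<open>a < N\<close> by (auto simp: primitive_root_unity_def power_0_left)
  define C where "C = (\<Prod>v\<in>U - {w. w ^ N = 1}. \<omega> - v)"
  have "C \<noteq> 0" using U \<open>\<omega> ^ N = 1\<close> by (auto simp: C_def)
  have at_\<omega>: "poly (\<Sum>x\<in>Q. cleared_poly U x) \<omega> = (\<Sum>x\<in>{x\<in>Q. snd x = N}. \<omega> ^ fst x) * C"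
    if "Q \<subseteq> PA \<union> PB" "finite Q" for Q
    unfolding C_def using that bounds
    by (intro poly_sum_cleared_poly_primitive_root[OF U \<open>{w. w ^ N = 1} \<subseteq> U\<close> _ _ \<omega>]) force+
  have fiber: "{x\<in>Q. snd x = N} = {(c, N)}" if "inj_on snd Q" "(c, N) \<in> Q" for Q c
  proof (intro equalityI subsetI)
    fix x assume "x \<in> {x\<in>Q. snd x = N}"
    then show "x \<in> {(c, N)}" using inj_onD[OF that(1), of x "(c, N)"] that(2) by auto
  qed (use that(2) in auto)
  have "\<omega> ^ a = (\<Sum>x\<in>{x\<in>PB. snd x = N}. \<omega> ^ fst x)"
    using at_\<omega>[of PA] at_\<omega>[of PB] eq fin \<open>C \<noteq> 0\<close> fiber[OF inj(1) top] by simp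
  show False
  proof (cases "\<exists>b. (b, N) \<in> PB")
    case True
    then obtain b where b: "(b, N) \<in> PB" ..
    then have "\<omega> ^ a = \<omega> ^ b" using \<open>\<omega> ^ a = _\<close> fiber[OF inj(2) b] by simp
    moreover have "b < N" "a \<noteq> b" using bounds[of b N] b top disj by auto
    ultimately show False using inj_onD[OF inj_pow, of a b] \<open>a < N\<close> by auto
  next
    case False
    then have "{x\<in>PB. snd x = N} = {}" by auto
    then have "\<omega> ^ a = 0" using \<open>\<omega> ^ a = _\<close> by (simp only: sum.empty)
    then show False using \<open>\<omega> \<noteq> 0\<close> by simp
  qed
qed

lemma eq_if_sum_cleared_poly_eq:
  assumes U: "finite U" and fin: "finite PA" "finite PB" and inj: "inj_on snd PA" "inj_on snd PB"
    and bounds: "\<And>a n. (a, n) \<in> PA \<union> PB \<Longrightarrow> a < n \<and> {w. w ^ n = 1} \<subseteq> U"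
    and eq: "(\<Sum>x\<in>PA. cleared_poly U x) = (\<Sum>x\<in>PB. cleared_poly U x)"
  shows "PA = PB"
proof (rule ccontr)
  assume "PA \<noteq> PB"
  define A B where "A = PA - PB" and "B = PB - PA"
  have AB: "finite A" "finite B" "A \<inter> B = {}" "inj_on snd A" "inj_on snd B"
    using fin inj by (auto simp: A_def B_def intro: inj_on_subset)
  have "A \<union> B \<noteq> {}" using \<open>PA \<noteq> PB\<close> by (auto simp: A_def B_def)
  define N where "N = Max (snd ` (A \<union> B))"
  have "N \<in> snd ` (A \<union> B)"
    unfolding N_def using AB(1,2) \<open>A \<union> B \<noteq> {}\<close> by (intro Max_in) auto
  then obtain a where top: "(a, N) \<in> A \<union> B" by force
  have bounds': "b < n \<and> n \<le> N \<and> {w. w ^ n = 1} \<subseteq> U" if "(b, n) \<in> A \<union> B" for b n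
  proof -
    have "(b, n) \<in> PA \<union> PB" using that by (auto simp: A_def B_def)
    moreover have "n \<le> N"
      unfolding N_def using AB(1,2) that by (intro Max_ge) force+
    ultimately show ?thesis using bounds[of b n] by simp
  qed
  have "(\<Sum>x\<in>PA. cleared_poly U x)
      = (\<Sum>x\<in>PA \<inter> PB. cleared_poly U x) + (\<Sum>x\<in>A. cleared_poly U x)"
    unfolding A_def by (rule sum.Int_Diff[OF fin(1)])
  moreover have "(\<Sum>x\<in>PB. cleared_poly U x)
      = (\<Sum>x\<in>PA \<inter> PB. cleared_poly U x) + (\<Sum>x\<in>B. cleared_poly U x)"
    unfolding B_def Int_commute[of PA] by (rule sum.Int_Diff[OF fin(2)])
  ultimately have eq': "(\<Sum>x\<in>A. cleared_poly U x) = (\<Sum>x\<in>B. cleared_poly U x)"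
    using eq by simp
  show False
  proof (cases "(a, N) \<in> A")
    case True
    show False by (rule sum_cleared_poly_top_modulus[OF U AB bounds' True eq'])
  next
    case False
    then have "(a, N) \<in> B" using top by blast
    have disj: "B \<inter> A = {}" using AB(3) by blast
    have "b < n \<and> n \<le> N \<and> {w. w ^ n = 1} \<subseteq> U" if "(b, n) \<in> B \<union> A" for b n
      using bounds' that by blast
    from sum_cleared_poly_top_modulus[OF U AB(2,1) disj AB(5,4) this \<open>(a, N) \<in> B\<close> eq'[symmetric]]
    show False .
  qed
qed

lemma frac_sum_eq_imp_eq:
  fixes PA PB :: "(nat \<times> nat) set" and p :: nat and \<zeta> :: complex
  assumes fin: "finite PA" "finite PB" and inj: "inj_on snd PA" "inj_on snd PB"
    and lt: "\<And>a n. (a, n) \<in> PA \<union> PB \<Longrightarrow> a < n"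
    and p: "prime p" "card (S_set (snd ` (PA \<union> PB))) < p"
    and \<zeta>: "\<zeta> ^ p = 1" "\<zeta> \<noteq> 1"
    and eq: "frac_sum PA \<zeta> = frac_sum PB \<zeta>"
  shows "PA = PB"
proof -
  define M where "M = snd ` (PA \<union> PB)"
  define U where "U = {w::complex. \<exists>n\<in>M. w ^ n = 1}"
  define W where "W = {w::complex. w ^ p = 1} - {1}"
  have "finite M" using fin by (simp add: M_def)
  have M: "0 < n \<and> n < p" if n: "n \<in> M" for n
  proof -
    obtain a where "(a, n) \<in> PA \<union> PB" using n unfolding M_def by force
    then have "0 < n" using lt by fastforce
    moreover have "n < p" using le_card_S_set[OF \<open>finite M\<close> n] p(2) by (simp add: M_def)
    ultimately show ?thesis ..
  qed
  then have coprime: "\<forall>n\<in>M. coprime n p"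
    using p(1) by (metis coprime_commute dvd_imp_le not_le prime_imp_coprime)
  have "0 \<notin> M" using M by blast
  then have "finite U" "card U < p"
    using card_roots_unity_le_card_S_set[OF \<open>finite M\<close>] p(2) by (auto simp: U_def M_def)
  have "card W = p - 1"
    using card_roots_unity_eq[of p] p(1) by (simp add: W_def card_Diff_singleton prime_gt_0_nat)
  have "W \<inter> U = {}"
    using coprime pow_eq_1_if_coprime by (auto simp: W_def U_def)
  have sub: "snd ` PA \<subseteq> M" "snd ` PB \<subseteq> M" by (auto simp: M_def)
  have "frac_sum PA w = frac_sum PB w" if "w \<in> W" for w
    using that by (intro frac_sum_eq_at_conjugate_root[OF p(1) \<open>finite M\<close> sub coprime \<zeta> _ _ eq])
      (simp_all add: W_def)
  moreover have bounds: "a < n \<and> {w. w ^ n = 1} \<subseteq> U" if "(a, n) \<in> PA \<union> PB" for a n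
    using lt[OF that] that by (force simp: U_def M_def)
  ultimately have "(\<Sum>x\<in>PA. cleared_poly U x) = (\<Sum>x\<in>PB. cleared_poly U x)"
    using \<open>card U < p\<close> \<open>card W = p - 1\<close> \<open>W \<inter> U = {}\<close> p(1) prime_gt_1_nat[of p]
    by (intro sum_cleared_poly_eq_if_frac_sum_eq[OF \<open>finite U\<close>]) auto
  then show ?thesis using eq_if_sum_cleared_poly_eq[OF \<open>finite U\<close> fin inj bounds] by blast
qed

theorem corollary1p3:
  fixes k l p :: nat and a n b m :: "nat \<Rightarrow> nat" and \<zeta> :: complex
  assumes n_pos: "\<forall>s<k. 0 < n s" and a_lt: "\<forall>s<k. a s < n s"
    and m_pos: "\<forall>t<l. 0 < m t" and b_lt: "\<forall>t<l. b t < m t"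
    and n_dist: "inj_on n {..<k}" and m_dist: "inj_on m {..<l}"
    and p_prime: "prime p"
    and p_big: "p > card (S_set (n ` {..<k} \<union> m ` {..<l}))"
    and zeta: "primitive_root_unity p \<zeta>"
  shows "(k = l \<and> {(a s, n s) | s. s < k} = {(b t, m t) | t. t < l}) \<longleftrightarrow>
         (\<Sum>s<k. \<zeta> ^ a s / (1 - \<zeta> ^ n s)) = (\<Sum>t<l. \<zeta> ^ b t / (1 - \<zeta> ^ m t))"
proof -
  define PA PB where "PA = (\<lambda>s. (a s, n s)) ` {..<k}" and "PB = (\<lambda>t. (b t, m t)) ` {..<l}"
  have inj: "inj_on (\<lambda>s. (a s, n s)) {..<k}" "inj_on (\<lambda>t. (b t, m t)) {..<l}"
    using n_dist m_dist by (auto simp: inj_on_def)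
  have sets: "{(a s, n s) | s. s < k} = PA" "{(b t, m t) | t. t < l} = PB"
    by (auto simp: PA_def PB_def)
  have sums: "(\<Sum>s<k. \<zeta> ^ a s / (1 - \<zeta> ^ n s)) = frac_sum PA \<zeta>"
    "(\<Sum>t<l. \<zeta> ^ b t / (1 - \<zeta> ^ m t)) = frac_sum PB \<zeta>"
    by (simp_all add: frac_sum_def PA_def PB_def sum.reindex[OF inj(1)] sum.reindex[OF inj(2)])
  have "\<zeta> ^ p = 1" "\<zeta> \<noteq> 1"
    using zeta prime_gt_1_nat[OF p_prime] by (auto simp: primitive_root_unity_def)
  have "PA = PB" if "frac_sum PA \<zeta> = frac_sum PB \<zeta>"
  proof (rule frac_sum_eq_imp_eq[OF _ _ _ _ _ p_prime _ \<open>\<zeta> ^ p = 1\<close> \<open>\<zeta> \<noteq> 1\<close> that])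
    show "finite PA" "finite PB" by (simp_all add: PA_def PB_def)
    show "inj_on snd PA" "inj_on snd PB"
      using n_dist m_dist by (auto simp: PA_def PB_def comp_def intro!: inj_on_imageI)
    show "x < y" if "(x, y) \<in> PA \<union> PB" for x y
      using that a_lt b_lt by (auto simp: PA_def PB_def)
    have "snd ` (PA \<union> PB) = n ` {..<k} \<union> m ` {..<l}"
      by (auto simp: PA_def PB_def image_Un image_image)
    then show "card (S_set (snd ` (PA \<union> PB))) < p" using p_big by simp
  qed
  moreover have "k = l" if "PA = PB"
    using that card_image[OF inj(1)] card_image[OF inj(2)] by (simp add: PA_def PB_def)
  ultimately show ?thesis using sets sums by auto
qed

end
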